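(* Let $n\geq 2$. Every cluster of $n$-permutations contains exactly one pair of twin permutations (i.e., exactly one unordered pair $\{\pi,\sigma\}$ of twins with both $\pi$ and $\sigma$ in the cluster).
   Context: An $n$-permutation is a permutation $\pi_1\cdots\pi_n$ of $\{1,\ldots,n\}$. For a word $w$ of distinct numbers, $\mathrm{red}(w)$ is the permutation obtained by replacing the $i$-th smallest letter by $i$. For an $(n-1)$-permutation $\tau$, the cluster with signature $\tau$ is the set of all $n$-permutations $\pi$ with $\mathrm{red}(\pi_1\cdots\pi_{n-1})=\tau$; there are $(n-1)!$ clusters, each with $n$ elements. Two different $n$-permutations $\pi=\pi_1\cdots\pi_n$ and $\sigma=\sigma_1\cdots\sigma_n$ are twins if $\mathrm{red}(\pi_1\cdots\pi_{n-1})=\mathrm{red}(\sigma_1\cdots\sigma_{n-1})$ and $|\pi_n-\pi_1|=|\sigma_n-\sigma_1|=1$. *)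

theory Defs
  imports Main
begin

definition nperm :: "nat \<Rightarrow> nat list \<Rightarrow> bool" where
  "nperm n p \<longleftrightarrow> length p = n \<and> distinct p \<and> set p = {1..n}"

text \<open>red(w): replace the i-th smallest letter by i (the rank of x is the number of letters \<le> x).\<close>
definition red :: "nat list \<Rightarrow> nat list" where
  "red w = map (\<lambda>x. card {y \<in> set w. y \<le> x}) w"

definition cluster :: "nat \<Rightarrow> nat list \<Rightarrow> nat list set" where
  "cluster n tau = {p. nperm n p \<and> red (take (n - 1) p) = tau}"

definition twins :: "nat \<Rightarrow> nat list \<Rightarrow> nat list \<Rightarrow> bool" where
  "twins n p s \<longleftrightarrow> nperm n p \<and> nperm n s \<and> p \<noteq> s
     \<and> red (take (n - 1) p) = red (take (n - 1) s)
     \<and> \<bar>int (p ! (n - 1)) - int (p ! 0)\<bar> = 1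
     \<and> \<bar>int (s ! (n - 1)) - int (s ! 0)\<bar> = 1"

end

theory Submission
  imports Defs
begin

text \<open>A member of the cluster with signature tau is determined by its last letter k: its
  first n - 1 letters are tau with every letter at least k raised by one. The first letter
  therefore has rank tau!0 among them, so the last and first letter differ by one exactly
  when k is tau!0 or tau!0 + 1. These two permutations form the unique twin pair.\<close>

definition shift_above :: "nat \<Rightarrow> nat \<Rightarrow> nat" where
  "shift_above k j = (if j < k then j else Suc j)"

lemma strict_mono_shift_above: "strict_mono (shift_above k)"
  by (simp add: strict_mono_Suc_iff shift_above_def)

lemma shift_above_image:
  assumes "k \<in> {1..n}"
  shows "shift_above k ` {1..n - 1} = {1..n} - {k}"
proof
  show "shift_above k ` {1..n - 1} \<subseteq> {1..n} - {k}"
    using assms by (auto simp: shift_above_def)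
  show "{1..n} - {k} \<subseteq> shift_above k ` {1..n - 1}"
  proof
    fix y assume y: "y \<in> {1..n} - {k}"
    show "y \<in> shift_above k ` {1..n - 1}"
    proof (cases "y < k")
      case True
      then show ?thesis using y assms by (intro image_eqI[of _ _ y]) (auto simp: shift_above_def)
    next
      case False
      then show ?thesis using y assms by (intro image_eqI[of _ _ "y - 1"]) (auto simp: shift_above_def)
    qed
  qed
qed

lemma red_map_strict_mono:
  assumes "strict_mono (f :: nat \<Rightarrow> nat)"
  shows "red (map f w) = red w"
proof -
  have "\<And>x. {y \<in> f ` set w. y \<le> f x} = f ` {y \<in> set w. y \<le> x}"
    using strict_mono_less_eq[OF assms] by auto
  moreover have "inj f" using assms strict_mono_imp_inj_on by blast
  ultimately show ?thesis
    unfolding red_def by (simp add: card_image inj_on_subset[of f UNIV])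
qed

lemma red_nperm:
  assumes "nperm m tau"
  shows "red tau = tau"
proof -
  have "card {y \<in> set tau. y \<le> x} = x" if "x \<in> set tau" for x
  proof -
    have "{y \<in> set tau. y \<le> x} = {1..x}" using that assms by (auto simp: nperm_def)
    then show ?thesis by simp
  qed
  then show ?thesis unfolding red_def by (simp add: map_idI)
qed

lemma card_le_less_card_le:
  assumes "a < b" "b \<in> A" "finite A"
  shows "card {y \<in> A. y \<le> a} < card {y \<in> A. (y :: nat) \<le> b}"
proof (rule psubset_card_mono)
  have "b \<in> {y \<in> A. y \<le> b}" "b \<notin> {y \<in> A. y \<le> a}" using assms by auto
  moreover have "{y \<in> A. y \<le> a} \<subseteq> {y \<in> A. y \<le> b}" using assms(1) by auto
  ultimately show "{y \<in> A. y \<le> a} \<subset> {y \<in> A. y \<le> b}" by blast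
qed (use assms in auto)

text \<open>At each position the letter is recovered from its rank, which is strictly monotone
  in the letter.\<close>

lemma red_eq_imp_eq:
  assumes "distinct w" "distinct w'" "set w = set w'" "red w = red w'"
  shows "w = w'"
proof -
  have len: "length w = length w'"
    using distinct_card[OF assms(1)] distinct_card[OF assms(2)] assms(3) by simp
  have rank: "card {y \<in> set w. y \<le> w ! i} = card {y \<in> set w. y \<le> w' ! i}"
    if "i < length w" for i
  proof -
    have "red w ! i = red w' ! i" using assms(4) by simp
    then show ?thesis using that len assms(3) by (simp add: red_def)
  qed
  have "w ! i = w' ! i" if i: "i < length w" for i
  proof (rule ccontr)
    assume "w ! i \<noteq> w' ! i"
    moreover have "w ! i \<in> set w" "w' ! i \<in> set w" using assms(3) i len nth_mem by metis+
    ultimately show False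
      using card_le_less_card_le[of "w ! i" "w' ! i" "set w"]
        card_le_less_card_le[of "w' ! i" "w ! i" "set w"] rank[OF i]
      by (metis finite_set linorder_neqE_nat order_less_irrefl)
  qed
  then show ?thesis by (rule nth_equalityI[OF len])
qed

lemma nperm_take_last:
  assumes "nperm n p" "n \<ge> 1"
  shows "p = take (n - 1) p @ [p ! (n - 1)]"
    and "set (take (n - 1) p) = {1..n} - {p ! (n - 1)}"
    and "distinct (take (n - 1) p)"
proof -
  have len: "length p = n" and dist: "distinct p" and set_p: "set p = {1..n}"
    using assms(1) by (auto simp: nperm_def)
  show split: "p = take (n - 1) p @ [p ! (n - 1)]"
    using take_Suc_conv_app_nth[of "n - 1" p] len assms(2) by simp
  show "distinct (take (n - 1) p)" using dist by simp
  have "distinct (take (n - 1) p @ [p ! (n - 1)])" using dist split by simp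
  moreover have "set p = insert (p ! (n - 1)) (set (take (n - 1) p))"
    using split by (metis Un_insert_right set_append empty_set list.simps(15) sup_bot.right_neutral)
  ultimately show "set (take (n - 1) p) = {1..n} - {p ! (n - 1)}"
    using set_p by auto
qed

lemma cluster_eqI:
  assumes "p \<in> cluster n tau" "q \<in> cluster n tau" "p ! (n - 1) = q ! (n - 1)" "n \<ge> 1"
  shows "p = q"
proof -
  have np: "nperm n p" "nperm n q"
    and red_eq: "red (take (n - 1) p) = red (take (n - 1) q)"
    using assms(1,2) by (auto simp: cluster_def)
  have "take (n - 1) p = take (n - 1) q"
  proof (rule red_eq_imp_eq)
    show "set (take (n - 1) p) = set (take (n - 1) q)"
      using nperm_take_last(2)[OF np(1) assms(4)] nperm_take_last(2)[OF np(2) assms(4)] assms(3)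
      by simp
  qed (use nperm_take_last(3) np assms(4) red_eq in auto)
  then show ?thesis
    using nperm_take_last(1)[OF np(1) assms(4)] nperm_take_last(1)[OF np(2) assms(4)] assms(3)
    by metis
qed

lemma cluster_first_rank:
  assumes "p \<in> cluster n tau" "n \<ge> 2"
  shows "tau ! 0 = (if p ! 0 < p ! (n - 1) then p ! 0 else p ! 0 - 1)"
proof -
  let ?w = "take (n - 1) p" and ?k = "p ! (n - 1)"
  have np: "nperm n p" and red_w: "red ?w = tau" using assms(1) by (auto simp: cluster_def)
  have set_w: "set ?w = {1..n} - {?k}" using nperm_take_last(2)[OF np] assms(2) by simp
  have len_w: "length ?w = n - 1" using np by (simp add: nperm_def)
  have w0: "?w ! 0 = p ! 0" using assms(2) by simp
  have "0 < length ?w" using len_w assms(2) by simp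
  then have "p ! 0 \<in> set ?w" using nth_mem w0 by metis
  then have first: "p ! 0 \<in> {1..n}" "p ! 0 \<noteq> ?k" using set_w by auto
  have last: "?k \<in> {1..n}" using np assms(2) by (auto simp: nperm_def)
  have "tau ! 0 = card {y \<in> set ?w. y \<le> p ! 0}"
    using red_w[symmetric] len_w w0 assms(2) unfolding red_def by simp
  also have "{y \<in> set ?w. y \<le> p ! 0} = {1..p ! 0} - {?k}"
    unfolding set_w using first(1) by auto
  also have "card \<dots> = (if p ! 0 < ?k then p ! 0 else p ! 0 - 1)"
  proof (cases "p ! 0 < ?k")
    case False
    then have "?k \<in> {1..p ! 0}" using first(2) last by auto
    then show ?thesis using False by (simp add: card_Diff_singleton)
  qed auto
  finally show ?thesis .
qed

definition extend_perm :: "nat list \<Rightarrow> nat \<Rightarrow> nat list" where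
  "extend_perm tau k = map (shift_above k) tau @ [k]"

lemma extend_perm_in_cluster:
  assumes "nperm (n - 1) tau" "k \<in> {1..n}" "n \<ge> 1"
  shows "extend_perm tau k \<in> cluster n tau"
proof -
  have len: "length tau = n - 1" and set_tau: "set tau = {1..n - 1}" and dist: "distinct tau"
    using assms(1) by (auto simp: nperm_def)
  have inj: "inj (shift_above k)"
    using strict_mono_shift_above strict_mono_imp_inj_on by blast
  have "nperm n (extend_perm tau k)"
    unfolding nperm_def extend_perm_def
    using len assms(2,3) set_tau dist shift_above_image[OF assms(2)] inj
    by (auto simp: distinct_map inj_on_subset[of _ UNIV])
  moreover have "take (n - 1) (extend_perm tau k) = map (shift_above k) tau"
    using len by (simp add: extend_perm_def)
  ultimately show ?thesis
    unfolding cluster_def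
    using red_map_strict_mono[OF strict_mono_shift_above] red_nperm[OF assms(1)] by simp
qed

lemma extend_perm_last: "length tau = n - 1 \<Longrightarrow> extend_perm tau k ! (n - 1) = k"
  by (simp add: extend_perm_def nth_append)

lemma extend_perm_first: "tau \<noteq> [] \<Longrightarrow> extend_perm tau k ! 0 = shift_above k (tau ! 0)"
  by (cases tau) (simp_all add: extend_perm_def)

lemma cluster_ends_adjacent_cases:
  assumes "nperm (n - 1) tau" "n \<ge> 2" "p \<in> cluster n tau"
    and "\<bar>int (p ! (n - 1)) - int (p ! 0)\<bar> = 1"
  shows "p = extend_perm tau (tau ! 0) \<or> p = extend_perm tau (Suc (tau ! 0))"
proof -
  let ?k = "p ! (n - 1)"
  have "?k \<in> {1..n}" using assms(2,3) by (auto simp: cluster_def nperm_def)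
  then have "extend_perm tau ?k \<in> cluster n tau"
    using extend_perm_in_cluster assms(1,2) by simp
  moreover have "extend_perm tau ?k ! (n - 1) = ?k"
    using assms(1) extend_perm_last by (simp add: nperm_def)
  ultimately have "p = extend_perm tau ?k"
    using cluster_eqI[OF assms(3)] assms(2) by simp
  moreover have "?k = tau ! 0 \<or> ?k = Suc (tau ! 0)"
    using cluster_first_rank[OF assms(3,2)] assms(4) by (auto split: if_splits)
  ultimately show ?thesis by auto
qed

lemma extend_perm_twin_candidates_in_cluster:
  assumes "nperm (n - 1) tau" "n \<ge> 2"
  shows "extend_perm tau (tau ! 0) \<in> cluster n tau"
    and "extend_perm tau (Suc (tau ! 0)) \<in> cluster n tau"
proof -
  have "tau ! 0 \<in> {1..n - 1}"
    using assms nth_mem[of 0 tau] unfolding nperm_def by auto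
  then show "extend_perm tau (tau ! 0) \<in> cluster n tau"
    and "extend_perm tau (Suc (tau ! 0)) \<in> cluster n tau"
    using extend_perm_in_cluster assms by auto
qed

lemma twins_extend_perm:
  assumes "nperm (n - 1) tau" "n \<ge> 2"
  shows "twins n (extend_perm tau (tau ! 0)) (extend_perm tau (Suc (tau ! 0)))"
proof -
  have len: "length tau = n - 1" and ne: "tau \<noteq> []"
    using assms by (auto simp: nperm_def)
  then have "extend_perm tau (tau ! 0) \<noteq> extend_perm tau (Suc (tau ! 0))"
    using extend_perm_last by (metis n_not_Suc_n)
  then show ?thesis
    using extend_perm_twin_candidates_in_cluster[OF assms]
    unfolding twins_def cluster_def extend_perm_last[OF len] extend_perm_first[OF ne]
    by (simp add: shift_above_def)
qed

lemma cluster_twins_eq: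
  assumes "nperm (n - 1) tau" "n \<ge> 2"
    and "p \<in> cluster n tau" "s \<in> cluster n tau" "twins n p s"
  shows "{p, s} = {extend_perm tau (tau ! 0), extend_perm tau (Suc (tau ! 0))}"
proof -
  have "p \<noteq> s" "\<bar>int (p ! (n - 1)) - int (p ! 0)\<bar> = 1" "\<bar>int (s ! (n - 1)) - int (s ! 0)\<bar> = 1"
    using assms(5) unfolding twins_def by blast+
  then have "p = extend_perm tau (tau ! 0) \<or> p = extend_perm tau (Suc (tau ! 0))"
    and "s = extend_perm tau (tau ! 0) \<or> s = extend_perm tau (Suc (tau ! 0))"
    using cluster_ends_adjacent_cases[OF assms(1,2)] assms(3,4) by blast+
  with \<open>p \<noteq> s\<close> show ?thesis by blast
qed

theorem lemma1:
  fixes n :: nat and tau :: "nat list"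
  assumes "n \<ge> 2" and "nperm (n - 1) tau"
  shows "card {{p, s} | p s. p \<in> cluster n tau \<and> s \<in> cluster n tau \<and> twins n p s} = 1"
proof -
  define A where "A = extend_perm tau (tau ! 0)"
  define B where "B = extend_perm tau (Suc (tau ! 0))"
  have "{{p, s} | p s. p \<in> cluster n tau \<and> s \<in> cluster n tau \<and> twins n p s} = {{A, B}}"
  proof (intro equalityI subsetI)
    fix X assume "X \<in> {{p, s} | p s. p \<in> cluster n tau \<and> s \<in> cluster n tau \<and> twins n p s}"
    then obtain p s where "X = {p, s}" "p \<in> cluster n tau" "s \<in> cluster n tau" "twins n p s"
      by blast
    then show "X \<in> {{A, B}}"
      using cluster_twins_eq[OF assms(2,1)] unfolding A_def B_def by simp
  next
    fix X assume "X \<in> {{A, B}}"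
    then show "X \<in> {{p, s} | p s. p \<in> cluster n tau \<and> s \<in> cluster n tau \<and> twins n p s}"
      using extend_perm_twin_candidates_in_cluster[OF assms(2,1)] twins_extend_perm[OF assms(2,1)]
      unfolding A_def B_def by blast
  qed
  then show ?thesis by simp
qed

end
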